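(* Let $M$ be a matroid on ground set $E$ and let $<$ be a pinned broken line shelling of $\mathcal{I}(M)$ whose first basis is $B$. For each non-loop element $i\in E\setminus B$, let $B_i$ be the basis whose restriction set with respect to $<$ is $\{i\}$. Let $I$ be an independent set of $M$ disjoint from $B$. Then for every $j\ge0$, the number of bases $B'$ whose restriction set has $|I|+j$ elements and such that the atoms of $\mathrm{Int}_<(M)$ below $B'$ are exactly the bases $\{B_i : i\in I\}$ is $h_j((M/I)|_B)$. If $\mathrm{Int}_<(M)$ is ranked, then the cardinality of the restriction sets may be replaced by the rank in $\mathrm{Int}_<(M)$.
   Context: Linear functionals $\ell\in(\mathbb{R}^E)^*$ are identified with functions $E\to\mathbb{R}$, and $\ell(B)=\sum_{b\in B}\ell(b)$. A broken line shelling is an ordering $B_1<\dots<B_n$ of all bases of $M$ such that for each $i$ there is a linear functional $\ell_i$ (a witness) with $\ell_i(B_j)<\ell_i(B_i)$ iff $j<i$; such an order is a shelling order of the independence complex $\mathcal{I}(M)$. It is pinned if the witnesses can be chosen so that for every $i$, $B_1$ is the basis of smallest $\ell_i$-weight. For a shelling order $F_1<\dots<F_k$ of a pure simplicial complex, the restriction set $\mathcal{R}(F_j)$ is the unique subset of $F_j$ such that the faces of $\langle F_1,\dots,F_j\rangle$ not in $\langle F_1,\dots,F_{j-1}\rangle$ are exactly the subsets of $F_j$ containing $\mathcal{R}(F_j)$. $\mathrm{Int}_<(M)$ is the poset on bases with $B'\preceq B''$ iff $\mathcal{R}(B')\subseteq\mathcal{R}(B'')$; its atoms are the elements covering its minimum.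 A loop is an element in no basis. $M/I$ is the contraction of $M$ by $I$, and $(M/I)|_B$ its restriction to the ground set $B$. For a matroid $N$, $h_j(N)$ is the $j$-th entry of the $h$-vector of its independence complex, where for a $(d-1)$-dimensional complex with $f_{i}$ faces of dimension $i$, $\sum_j h_j x^j=\sum_j f_{j-1}x^j(1-x)^{d-j}$. *)

theory Defs
  imports Main "HOL-Computational_Algebra.Polynomial"
begin

definition matroid :: "'a set \<Rightarrow> 'a set set \<Rightarrow> bool" where
  "matroid E Bs \<longleftrightarrow> finite E \<and> Bs \<noteq> {} \<and> (\<forall>B\<in>Bs. B \<subseteq> E) \<and>
     (\<forall>B1\<in>Bs. \<forall>B2\<in>Bs. \<forall>x\<in>B1 - B2. \<exists>y\<in>B2 - B1. insert y (B1 - {x}) \<in> Bs)"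

definition indep :: "'a set set \<Rightarrow> 'a set \<Rightarrow> bool" where
  "indep Bs X \<longleftrightarrow> (\<exists>B\<in>Bs. X \<subseteq> B)"

definition is_loop :: "'a set \<Rightarrow> 'a set set \<Rightarrow> 'a \<Rightarrow> bool" where
  "is_loop E Bs e \<longleftrightarrow> e \<in> E \<and> (\<forall>B\<in>Bs. e \<notin> B)"

text \<open>Independent sets of the matroid (M/I)|_S, for I independent and S a subset of E - I:
  J is independent in M/I iff J is a subset of E - I and J \<union> I is independent in M.\<close>
definition contract_restrict_indeps :: "'a set \<Rightarrow> 'a set set \<Rightarrow> 'a set \<Rightarrow> 'a set \<Rightarrow> 'a set set" where
  "contract_restrict_indeps E Bs I S = {J. J \<subseteq> S \<and> J \<subseteq> E - I \<and> indep Bs (J \<union> I)}"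

definition hvec :: "'a set set \<Rightarrow> nat \<Rightarrow> int" where
  "hvec F j = (let d = Max (card ` F) in
     coeff (\<Sum>k\<le>d. of_nat (card {X\<in>F. card X = k}) * monom 1 k * [:1, -1:] ^ (d - k)) j)"

definition lweight :: "('a \<Rightarrow> real) \<Rightarrow> 'a set \<Rightarrow> real" where
  "lweight l B = (\<Sum>b\<in>B. l b)"

definition broken_line_shelling :: "'a set set \<Rightarrow> 'a set list \<Rightarrow> bool" where
  "broken_line_shelling Bs L \<longleftrightarrow> distinct L \<and> set L = Bs \<and>
     (\<forall>i<length L. \<exists>l. \<forall>j<length L. lweight l (L!j) < lweight l (L!i) \<longleftrightarrow> j < i)"

definition pinned_broken_line_shelling :: "'a set set \<Rightarrow> 'a set list \<Rightarrow> bool" where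
  "pinned_broken_line_shelling Bs L \<longleftrightarrow> distinct L \<and> set L = Bs \<and> L \<noteq> [] \<and>
     (\<forall>i<length L. \<exists>l. (\<forall>j<length L. lweight l (L!j) < lweight l (L!i) \<longleftrightarrow> j < i) \<and>
        (\<forall>j<length L. j \<noteq> 0 \<longrightarrow> lweight l (L!0) < lweight l (L!j)))"

text \<open>Restriction set of the k-th facet (0-based) of the ordering L of facets.\<close>
definition restr :: "'a set list \<Rightarrow> nat \<Rightarrow> 'a set" where
  "restr L k = (THE R. R \<subseteq> L!k \<and>
     {F. F \<subseteq> L!k \<and> \<not> (\<exists>k'<k. F \<subseteq> L!k')} = {F. R \<subseteq> F \<and> F \<subseteq> L!k})"

section \<open>The poset Int_<(M), on indices 0..<length L\<close>

definition int_le :: "'a set list \<Rightarrow> nat \<Rightarrow> nat \<Rightarrow> bool" where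
  "int_le L a b \<longleftrightarrow> restr L a \<subseteq> restr L b"

definition int_lt :: "'a set list \<Rightarrow> nat \<Rightarrow> nat \<Rightarrow> bool" where
  "int_lt L a b \<longleftrightarrow> int_le L a b \<and> \<not> int_le L b a"

definition int_covers :: "'a set list \<Rightarrow> nat \<Rightarrow> nat \<Rightarrow> bool" where
  "int_covers L a b \<longleftrightarrow> a < length L \<and> b < length L \<and> int_lt L a b \<and>
     \<not> (\<exists>c<length L. int_lt L a c \<and> int_lt L c b)"

definition int_is_min :: "'a set list \<Rightarrow> nat \<Rightarrow> bool" where
  "int_is_min L m \<longleftrightarrow> m < length L \<and> (\<forall>b<length L. int_le L m b)"

definition int_atom :: "'a set list \<Rightarrow> nat \<Rightarrow> bool" where
  "int_atom L a \<longleftrightarrow> (\<exists>m. int_is_min L m \<and> int_covers L m a)"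

definition atoms_below :: "'a set list \<Rightarrow> nat \<Rightarrow> nat set" where
  "atoms_below L b = {a. a < length L \<and> int_atom L a \<and> int_le L a b}"

definition int_rank_fun :: "'a set list \<Rightarrow> (nat \<Rightarrow> nat) \<Rightarrow> bool" where
  "int_rank_fun L \<rho> \<longleftrightarrow> (\<forall>m. int_is_min L m \<longrightarrow> \<rho> m = 0) \<and>
     (\<forall>a b. int_covers L a b \<longrightarrow> \<rho> b = \<rho> a + 1)"

definition int_ranked :: "'a set list \<Rightarrow> bool" where
  "int_ranked L \<longleftrightarrow> (\<exists>m. int_is_min L m) \<and> (\<exists>\<rho>. int_rank_fun L \<rho>)"

end

theory Submission
  imports Defs
begin

text \<open>For a broken line shelling, the restriction set of a basis B is
  R(B) = {b \<in> B. B - b lies in an earlier basis}: if a face T of B lies in an earlier basis, a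
  witness of B and a weight-decreasing exchange towards that basis find some b \<in> R(B) outside T.
  Pinning makes the first basis B0 the unique lightest basis for every witness; hence
  B - B0 \<subseteq> R(B), and for each independent J disjoint from B0 the first basis B with B - B0 = J has
  R(B) = J. So the atoms of Int_<(M) are the bases with R(B) = {x}, x \<notin> B0, the atoms below B
  correspond to B - B0, and the bases counted are those with B - B0 = I, for which
  |R(B)| = |I| + |R(B) \<inter> B0|. Sending a face G of (M/I)|_B0 to the first basis containing G \<union> I
  partitions this complex into the intervals [R(B) \<inter> B0, B \<inter> B0] over these bases, all of size
  rk - |I|, so its h-polynomial is the sum of the x^|R(B) \<inter> B0|. Finally, the rank of B in
  Int_<(M) is |R(B)|, since every nonempty restriction set contains a restriction set with one
  element fewer.\<close>

lemma finite_obtain_arg_max: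
  fixes f :: "'a \<Rightarrow> 'b::linorder"
  assumes "finite S" "S \<noteq> {}"
  obtains x where "x \<in> S" "\<And>y. y \<in> S \<Longrightarrow> f y \<le> f x"
proof -
  have "Max (f ` S) \<in> f ` S"
    using assms by simp
  then obtain x where "x \<in> S" "f x = Max (f ` S)"
    by auto
  then show ?thesis
    using that assms by simp
qed

section \<open>Exchange properties of matroid bases\<close>

locale basis_matroid =
  fixes E :: "'a set" and Bs :: "'a set set"
  assumes matroid: "matroid E Bs"
begin

lemma finite_ground: "finite E"
  using matroid by (simp add: matroid_def)

lemma basis_subset_ground: "B \<in> Bs \<Longrightarrow> B \<subseteq> E"
  using matroid by (auto simp: matroid_def)

lemma finite_basis: "B \<in> Bs \<Longrightarrow> finite B"
  using basis_subset_ground finite_ground finite_subset by blast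

lemma bases_nonempty: "Bs \<noteq> {}"
  using matroid by (simp add: matroid_def)

lemma finite_bases: "finite Bs"
  using basis_subset_ground finite_ground finite_subset[of Bs "Pow E"] by blast

lemma basis_exchange:
  "B1 \<in> Bs \<Longrightarrow> B2 \<in> Bs \<Longrightarrow> x \<in> B1 - B2 \<Longrightarrow> \<exists>y\<in>B2 - B1. insert y (B1 - {x}) \<in> Bs"
  using matroid unfolding matroid_def by blast

lemma card_basis_eq:
  assumes "B1 \<in> Bs" and B2: "B2 \<in> Bs"
  shows "card B1 = card B2"
  using assms(1)
proof (induction "card (B1 - B2)" arbitrary: B1 rule: less_induct)
  case (less B1)
  show ?case
  proof (cases "B1 \<subseteq> B2")
    case True
    moreover have "B2 \<subseteq> B1"
      using basis_exchange[OF B2 less.prems] True by blast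
    ultimately show ?thesis
      by simp
  next
    case False
    then obtain x where x: "x \<in> B1 - B2"
      by blast
    then obtain y where y: "y \<in> B2 - B1" "insert y (B1 - {x}) \<in> Bs"
      using basis_exchange[OF less.prems B2] by blast
    have "insert y (B1 - {x}) - B2 = (B1 - B2) - {x}"
      using x y by auto
    then have "card (insert y (B1 - {x}) - B2) < card (B1 - B2)"
      using card_Diff1_less[of "B1 - B2" x] x finite_basis[OF less.prems] by simp
    then have "card (insert y (B1 - {x})) = card B2"
      using less.hyps y(2) by blast
    moreover have "card (insert y (B1 - {x})) = card B1"
    proof -
      have "card B1 > 0"
        using x finite_basis[OF less.prems] card_gt_0_iff by blast
      then show ?thesis
        using x y finite_basis[OF less.prems] by simp
    qed
    ultimately show ?thesis
      by simp
  qed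
qed

definition rank :: nat where
  "rank = card (SOME B. B \<in> Bs)"

lemma card_basis: "B \<in> Bs \<Longrightarrow> card B = rank"
  unfolding rank_def by (metis card_basis_eq bases_nonempty some_in_eq)

lemma basis_indep: "B \<in> Bs \<Longrightarrow> indep Bs B"
  unfolding indep_def by blast

lemma indep_subset: "indep Bs X \<Longrightarrow> Y \<subseteq> X \<Longrightarrow> indep Bs Y"
  unfolding indep_def by blast

lemma indep_subset_ground: "indep Bs X \<Longrightarrow> X \<subseteq> E"
  unfolding indep_def using basis_subset_ground by blast

lemma finite_indep: "indep Bs X \<Longrightarrow> finite X"
  using indep_subset_ground finite_ground finite_subset by blast

lemma card_indep_le_rank: "indep Bs X \<Longrightarrow> card X \<le> rank"
  unfolding indep_def using finite_basis card_mono card_basis by metis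

lemma indep_card_rank_basis: "indep Bs X \<Longrightarrow> card X = rank \<Longrightarrow> X \<in> Bs"
  unfolding indep_def using finite_basis card_basis card_subset_eq by metis

lemma basis_subset_eq: "X \<in> Bs \<Longrightarrow> Y \<in> Bs \<Longrightarrow> X \<subseteq> Y \<Longrightarrow> X = Y"
  using finite_basis card_basis card_subset_eq by metis

lemma card_basis_remove:
  assumes "B \<in> Bs" "b \<in> B"
  shows "card (B - {b}) + 1 = rank"
proof -
  have "card B > 0"
    using assms finite_basis card_gt_0_iff by blast
  then show ?thesis
    using assms finite_basis card_basis by simp
qed

lemma card_basis_exchange:
  assumes "B \<in> Bs" "b \<in> B" "e \<notin> B"
  shows "card (insert e (B - {b})) = rank"
  using card_basis_remove[OF assms(1,2)] assms(3) finite_basis[OF assms(1)] by simp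

text \<open>Take a basis A \<supseteq> X meeting a fixed basis C \<supseteq> Y as much as possible. If no element of
  Y - X augments X, exchanges show A - C \<subseteq> X - Y and Y - X \<subseteq> C - A, so
  |Y - X| \<le> |C - A| = |A - C| \<le> |X - Y|, contradicting |X| < |Y|.\<close>
lemma indep_augment:
  assumes X: "indep Bs X" and Y: "indep Bs Y" and less: "card X < card Y"
  shows "\<exists>y\<in>Y - X. indep Bs (insert y X)"
proof (rule ccontr)
  assume no_aug: "\<not> ?thesis"
  obtain C where C: "C \<in> Bs" "Y \<subseteq> C"
    using Y unfolding indep_def by blast
  have "finite {A \<in> Bs. X \<subseteq> A}" "{A \<in> Bs. X \<subseteq> A} \<noteq> {}"
    using X finite_bases unfolding indep_def by auto
  then obtain A where A: "A \<in> Bs" "X \<subseteq> A"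
    and A_max: "\<And>A'. A' \<in> Bs \<Longrightarrow> X \<subseteq> A' \<Longrightarrow> card (A' \<inter> C) \<le> card (A \<inter> C)"
    using finite_obtain_arg_max[of _ "\<lambda>A. card (A \<inter> C)"] by (metis (no_types, lifting) mem_Collect_eq)
  have "A - C \<subseteq> X"
  proof
    fix x assume x: "x \<in> A - C"
    show "x \<in> X"
    proof (rule ccontr)
      assume "x \<notin> X"
      obtain z where z: "z \<in> C - A" "insert z (A - {x}) \<in> Bs"
        using basis_exchange[OF A(1) C(1) x] by blast
      have "insert z (A - {x}) \<inter> C = insert z (A \<inter> C)"
        using x z by blast
      then have "card (insert z (A - {x}) \<inter> C) = Suc (card (A \<inter> C))"
        using z finite_basis[OF A(1)] by simp
      moreover have "card (insert z (A - {x}) \<inter> C) \<le> card (A \<inter> C)"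
        using A_max[OF z(2)] A(2) \<open>x \<notin> X\<close> by blast
      ultimately show False by simp
    qed
  qed
  then have "A - C \<subseteq> X - Y"
    using C(2) by blast
  moreover have "Y - X \<subseteq> C - A"
    using no_aug A C(2) unfolding indep_def by blast
  moreover have "card (A - C) = card (C - A)"
    using card_basis_eq[OF A(1) C(1)] finite_basis[OF A(1)] finite_basis[OF C(1)]
    by (simp add: card_Diff_subset_Int Int_commute)
  moreover have "card (X - Y) < card (Y - X)"
    using less finite_indep[OF X] finite_indep[OF Y] card_mono[of X "X \<inter> Y"]
    by (simp add: card_Diff_subset_Int Int_commute)
  ultimately show False
    using card_mono[of "X - Y" "A - C"] card_mono[of "C - A" "Y - X"]
      finite_indep[OF X] finite_basis[OF C(1)] by simp
qed

lemma finite_indeps: "finite {X. indep Bs X}"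
proof (rule finite_subset)
  show "{X. indep Bs X} \<subseteq> Pow E"
    using indep_subset_ground by blast
qed (simp add: finite_ground)

lemma indep_max_extension:
  assumes Y: "indep Bs Y" "Y \<subseteq> S"
  obtains T where "Y \<subseteq> T" "T \<subseteq> S" "indep Bs T"
    "\<And>X. X \<subseteq> S \<Longrightarrow> indep Bs X \<Longrightarrow> card X \<le> card T"
proof -
  let ?F = "{T. Y \<subseteq> T \<and> T \<subseteq> S \<and> indep Bs T}"
  have "finite ?F"
    using finite_indeps by (rule rev_finite_subset) auto
  moreover have "Y \<in> ?F"
    using Y by blast
  ultimately obtain T where "T \<in> ?F" and T_max: "\<And>T'. T' \<in> ?F \<Longrightarrow> card T' \<le> card T"
    using finite_obtain_arg_max[of ?F card] by blast
  then have T: "Y \<subseteq> T" "T \<subseteq> S" "indep Bs T"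
    by auto
  have "card X \<le> card T" if X: "X \<subseteq> S" "indep Bs X" for X
  proof (rule ccontr)
    assume "\<not> card X \<le> card T"
    then obtain x where x: "x \<in> X - T" "indep Bs (insert x T)"
      using indep_augment[OF T(3) X(2)] by auto
    then have "card (insert x T) \<le> card T"
      using T X T_max[of "insert x T"] by auto
    then show False
      using x finite_indep[OF T(3)] by simp
  qed
  then show ?thesis
    using that T by blast
qed

lemma indep_extend_basis:
  assumes X: "indep Bs X" and Z: "Z \<in> Bs"
  obtains W where "W \<subseteq> Z" "X \<union> W \<in> Bs"
proof -
  obtain T where T: "X \<subseteq> T" "T \<subseteq> X \<union> Z" "indep Bs T"
    and T_max: "\<And>X'. X' \<subseteq> X \<union> Z \<Longrightarrow> indep Bs X' \<Longrightarrow> card X' \<le> card T"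
    by (rule indep_max_extension[OF X, of "X \<union> Z"]) auto
  have "card Z \<le> card T"
    using T_max[OF _ basis_indep[OF Z]] by blast
  then have "card T = rank"
    using card_basis[OF Z] card_indep_le_rank[OF T(3)] by linarith
  then have "T \<in> Bs"
    using indep_card_rank_basis T(3) by blast
  moreover have "X \<union> (T - X) = T"
    using T(1) by blast
  ultimately show ?thesis
    using that[of "T - X"] T(2) by auto
qed

text \<open>The set {c \<in> C. C - c + a is a basis} is the fundamental circuit of a in C, minus a.\<close>
lemma insert_exchangeable_dependent:
  assumes C: "C \<in> Bs" and a: "a \<notin> C"
  shows "\<not> indep Bs (insert a {c \<in> C. insert a (C - {c}) \<in> Bs})"
    (is "\<not> indep Bs (insert a ?Y)")
proof
  assume "indep Bs (insert a ?Y)"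
  then obtain W where W: "W \<subseteq> C" "insert a ?Y \<union> W \<in> Bs"
    by (rule indep_extend_basis[OF _ C])
  define Z where "Z = insert a ?Y \<union> W"
  have Z: "Z \<in> Bs" "Z \<subseteq> insert a C" "a \<in> Z"
    using W Z_def by auto
  have "\<not> C \<subseteq> Z"
  proof
    assume "C \<subseteq> Z"
    then have "card (insert a C) \<le> card Z"
      using Z finite_basis by (simp add: card_mono)
    then show False
      using a C Z card_basis finite_basis by simp
  qed
  then obtain c where c: "c \<in> C" "c \<notin> Z"
    by blast
  then have "Z \<subseteq> insert a (C - {c})"
    using Z by blast
  then have "Z = insert a (C - {c})"
    using card_subset_eq[of "insert a (C - {c})" Z] C c(1) a Z(1) finite_basis
      card_basis card_basis_exchange by simp
  then have "c \<in> ?Y"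
    using Z(1) c(1) by simp
  then show False
    using c(2) Z_def by blast
qed

lemma symmetric_exchange_of_basis_inside:
  assumes A: "A \<in> Bs" and a: "a \<in> A - C"
    and X: "X \<subseteq> (A - {a}) \<union> {c \<in> C. insert a (C - {c}) \<in> Bs}" "indep Bs X" "card X = rank"
  shows "\<exists>c\<in>C - A. insert c (A - {a}) \<in> Bs \<and> insert a (C - {c}) \<in> Bs"
proof -
  have "card (A - {a}) + 1 = rank"
    using card_basis_remove[OF A] a by blast
  then have "card (A - {a}) < card X"
    using X(3) by linarith
  then obtain s where s: "s \<in> X - (A - {a})" "indep Bs (insert s (A - {a}))"
    using indep_augment[OF indep_subset[OF basis_indep[OF A]] X(2)] by blast
  then have "s \<in> C - A" "insert a (C - {s}) \<in> Bs"
    using X(1) a by auto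
  moreover have "insert s (A - {a}) \<in> Bs"
    using indep_card_rank_basis[OF s(2)] card_basis_exchange[OF A] a \<open>s \<in> C - A\<close> by simp
  ultimately show ?thesis
    by blast
qed

text \<open>Otherwise, by the previous lemma, S = (A - a) \<union> Y with Y as above contains no basis; a
  maximal independent T with Y \<subseteq> T \<subseteq> S then has rank - 1 elements and is augmented from A by an
  element other than a, a contradiction.\<close>
lemma basis_symmetric_exchange:
  assumes A: "A \<in> Bs" and C: "C \<in> Bs" and a: "a \<in> A - C"
  shows "\<exists>c\<in>C - A. insert c (A - {a}) \<in> Bs \<and> insert a (C - {c}) \<in> Bs"
proof (rule ccontr)
  assume no_exchange: "\<not> ?thesis"
  define Y where "Y = {c \<in> C. insert a (C - {c}) \<in> Bs}"
  define S where "S = (A - {a}) \<union> Y"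
  have small: "card X < rank" if X: "X \<subseteq> S" "indep Bs X" for X
  proof (rule ccontr)
    assume "\<not> card X < rank"
    then have "card X = rank"
      using card_indep_le_rank[OF X(2)] by simp
    then show False
      using symmetric_exchange_of_basis_inside[OF A a _ X(2)] X(1) no_exchange
      unfolding S_def Y_def by blast
  qed
  have "Y \<subseteq> C"
    unfolding Y_def by blast
  then have "indep Bs Y"
    by (rule indep_subset[OF basis_indep[OF C]])
  then obtain T where T: "Y \<subseteq> T" "T \<subseteq> S" "indep Bs T"
    and T_max: "\<And>X. X \<subseteq> S \<Longrightarrow> indep Bs X \<Longrightarrow> card X \<le> card T"
    by (rule indep_max_extension[of Y S]) (auto simp: S_def)
  have "card (A - {a}) \<le> card T"
    using T_max[OF _ indep_subset[OF basis_indep[OF A]]] unfolding S_def by blast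
  moreover have "card (A - {a}) + 1 = rank"
    using card_basis_remove[OF A] a by blast
  ultimately have card_T: "card T + 1 = rank"
    using small[OF T(2,3)] by linarith
  then obtain x where x: "x \<in> A - T" "indep Bs (insert x T)"
    using indep_augment[OF T(3) basis_indep[OF A]] card_basis[OF A] by auto
  have "\<not> indep Bs (insert a Y)"
    using insert_exchangeable_dependent[OF C] a unfolding Y_def by blast
  then have "\<not> indep Bs (insert a T)"
    using indep_subset[of "insert a T" "insert a Y"] T(1) by blast
  then have "x \<noteq> a"
    using x(2) by blast
  then have "insert x T \<subseteq> S"
    using x(1) T(2) unfolding S_def by blast
  moreover have "card (insert x T) = rank"
    using x(1) finite_indep[OF T(3)] card_T by simp
  ultimately show False
    using small[OF _ x(2)] by simp
qed

lemma basis_exchange_of_supset: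
  assumes X: "X \<in> Bs" and Y: "Y \<in> Bs" and b: "b \<in> Y" and sub: "Y - {b} \<subseteq> X"
    and "X \<noteq> Y"
  shows "\<exists>e. e \<notin> Y \<and> X = insert e (Y - {b})"
proof -
  have "b \<notin> X"
    using sub basis_subset_eq[OF Y X] \<open>X \<noteq> Y\<close> by blast
  have "\<not> X \<subseteq> Y - {b}"
  proof
    assume "X \<subseteq> Y - {b}"
    then have "X = Y - {b}"
      using sub by blast
    then show False
      using card_basis[OF X] card_basis_remove[OF Y b] by simp
  qed
  then obtain e where e: "e \<in> X" "e \<notin> Y"
    using \<open>b \<notin> X\<close> by blast
  have "insert e (Y - {b}) \<subseteq> X"
    using e sub by blast
  moreover have "card (insert e (Y - {b})) = card X"
    using card_basis[OF X] card_basis_exchange[OF Y b e(2)] by simp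
  ultimately have "insert e (Y - {b}) = X"
    by (rule card_subset_eq[OF finite_basis[OF X]])
  then show ?thesis
    using e by blast
qed

end

lemma lweight_exchange:
  assumes "finite C" "c \<in> C" "a \<notin> C"
  shows "lweight l (insert a (C - {c})) = lweight l C - l c + l a"
  using assms unfolding lweight_def by (simp add: sum_diff1)

definition unique_min_weight_basis :: "'a set set \<Rightarrow> ('a \<Rightarrow> real) \<Rightarrow> 'a set \<Rightarrow> bool" where
  "unique_min_weight_basis Bs l B0 \<longleftrightarrow>
     B0 \<in> Bs \<and> (\<forall>B\<in>Bs. B \<noteq> B0 \<longrightarrow> lweight l B0 < lweight l B)"

lemma unique_min_weight_basisD:
  assumes "unique_min_weight_basis Bs l B0"
  shows "B0 \<in> Bs" and "B \<in> Bs \<Longrightarrow> B \<noteq> B0 \<Longrightarrow> lweight l B0 < lweight l B"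
  using assms unfolding unique_min_weight_basis_def by auto

context basis_matroid
begin

lemma weight_decreasing_exchange:
  assumes A: "A \<in> Bs" and "C \<in> Bs" "lweight l C < lweight l A"
  shows "\<exists>a\<in>A - C. \<exists>c\<in>C - A. insert c (A - {a}) \<in> Bs \<and> l c < l a"
  using assms(2,3)
proof (induction "card (A - C)" arbitrary: C rule: less_induct)
  case (less C)
  have "\<not> A \<subseteq> C"
    using basis_subset_eq[OF A less.prems(1)] less.prems(2) by auto
  then obtain a where a: "a \<in> A - C"
    by blast
  then obtain c where c: "c \<in> C - A" "insert c (A - {a}) \<in> Bs" "insert a (C - {c}) \<in> Bs"
    using basis_symmetric_exchange[OF A less.prems(1)] by blast
  show ?case
  proof (cases "l c < l a")
    case True
    then show ?thesis
      using a c by blast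
  next
    case False
    define C' where "C' = insert a (C - {c})"
    have "lweight l C' = lweight l C - l c + l a"
      unfolding C'_def using lweight_exchange[of C c a l] finite_basis[OF less.prems(1)] a c by simp
    then have "lweight l C' < lweight l A"
      using False less.prems(2) by simp
    moreover have "A - C' = (A - C) - {a}"
      using c unfolding C'_def by auto
    then have "card (A - C') < card (A - C)"
      using card_Diff1_less[of "A - C" a] a finite_basis[OF A] by simp
    ultimately obtain a' c' where
      "a' \<in> A - C'" "c' \<in> C' - A" "insert c' (A - {a'}) \<in> Bs" "l c' < l a'"
      using less.hyps[OF _ c(3)[folded C'_def]] by blast
    moreover have "a' \<in> A - C" "c' \<in> C - A"
      using calculation(1,2) a c unfolding C'_def by auto
    ultimately show ?thesis
      by blast
  qed
qed

lemma unique_min_weight_basis_exchange_heavier: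
  assumes B0: "unique_min_weight_basis Bs l B0"
    and "c \<in> B0" "e \<notin> B0" "insert e (B0 - {c}) \<in> Bs"
  shows "l c < l e"
proof -
  have "insert e (B0 - {c}) \<noteq> B0"
    using assms(3) by blast
  then have "lweight l B0 < lweight l (insert e (B0 - {c}))"
    by (rule unique_min_weight_basisD(2)[OF B0 assms(4)])
  also have "\<dots> = lweight l B0 - l c + l e"
    by (rule lweight_exchange[OF finite_basis[OF unique_min_weight_basisD(1)[OF B0]] assms(2,3)])
  finally show ?thesis
    by simp
qed

text \<open>Among the x with D + x a basis, one of least weight must lie in B0: otherwise a symmetric
  exchange with B0 would produce a lighter one.\<close>
lemma unique_min_weight_basis_lighter_exchange:
  assumes B0: "unique_min_weight_basis Bs l B0"
    and e: "insert e D \<in> Bs" "e \<notin> insert b D" "l e < l b"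
  obtains x where "x \<in> B0" "x \<notin> insert b D" "insert x D \<in> Bs" "l x < l b"
proof -
  let ?X = "{x. x \<notin> insert b D \<and> insert x D \<in> Bs}"
  have "?X \<subseteq> E"
    using basis_subset_ground by blast
  then have "finite ?X"
    using finite_ground finite_subset by blast
  moreover have "e \<in> ?X"
    using e by blast
  ultimately obtain x where x: "x \<in> ?X" and x_min: "\<And>y. y \<in> ?X \<Longrightarrow> - l y \<le> - l x"
    using finite_obtain_arg_max[of ?X "\<lambda>x. - l x"] by blast
  have "l x < l b"
    using x_min[OF \<open>e \<in> ?X\<close>] e(3) by simp
  have "x \<in> B0"
  proof (rule ccontr)
    assume "x \<notin> B0"
    then obtain c where c: "c \<in> B0 - insert x D" "insert c (insert x D - {x}) \<in> Bs"
      "insert x (B0 - {c}) \<in> Bs"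
      using basis_symmetric_exchange[of "insert x D" B0 x] x unique_min_weight_basisD(1)[OF B0]
      by blast
    have "l c < l x"
      using unique_min_weight_basis_exchange_heavier[OF B0 _ \<open>x \<notin> B0\<close> c(3)] c(1) by blast
    moreover have "insert x D - {x} = D"
      using x by blast
    ultimately have "c \<notin> ?X"
      using x_min[of c] by linarith
    then have "c = b"
      using c \<open>insert x D - {x} = D\<close> by auto
    then show False
      using \<open>l c < l x\<close> \<open>l x < l b\<close> by simp
  qed
  with x \<open>l x < l b\<close> show ?thesis
    by (intro that) auto
qed

end

section \<open>Restriction sets of broken line shellings\<close>

definition shelling_witness :: "'a set list \<Rightarrow> nat \<Rightarrow> ('a \<Rightarrow> real) \<Rightarrow> bool" where
  "shelling_witness L k l \<longleftrightarrow> (\<forall>j<length L. lweight l (L!j) < lweight l (L!k) \<longleftrightarrow> j < k)"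

definition first_facet :: "'a set list \<Rightarrow> 'a set \<Rightarrow> nat" where
  "first_facet L T = (LEAST k. k < length L \<and> T \<subseteq> L!k)"

lemma restr_eqI:
  assumes "R \<subseteq> L!k" and "\<And>T. T \<subseteq> L!k \<Longrightarrow> \<not> (\<exists>m<k. T \<subseteq> L!m) \<longleftrightarrow> R \<subseteq> T"
  shows "restr L k = R"
proof -
  have new: "{F. F \<subseteq> L!k \<and> \<not> (\<exists>m<k. F \<subseteq> L!m)} = {F. R \<subseteq> F \<and> F \<subseteq> L!k}"
    using assms(2) by blast
  show ?thesis
    unfolding restr_def
  proof (rule the_equality)
    show "R \<subseteq> L!k \<and> {F. F \<subseteq> L!k \<and> \<not> (\<exists>m<k. F \<subseteq> L!m)} = {F. R \<subseteq> F \<and> F \<subseteq> L!k}"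
      using assms(1) new by blast
  next
    fix R' assume R': "R' \<subseteq> L!k \<and> {F. F \<subseteq> L!k \<and> \<not> (\<exists>m<k. F \<subseteq> L!m)} = {F. R' \<subseteq> F \<and> F \<subseteq> L!k}"
    then have intervals: "{F. R' \<subseteq> F \<and> F \<subseteq> L!k} = {F. R \<subseteq> F \<and> F \<subseteq> L!k}"
      using new by simp
    have "R' \<in> {F. R' \<subseteq> F \<and> F \<subseteq> L!k}"
      using R' by blast
    then have "R \<subseteq> R'"
      unfolding intervals by blast
    have "R \<in> {F. R \<subseteq> F \<and> F \<subseteq> L!k}"
      using assms(1) by blast
    then have "R' \<subseteq> R"
      unfolding intervals[symmetric] by blast
    with \<open>R \<subseteq> R'\<close> show "R' = R"
      by blast
  qed
qed

lemma
  assumes "k < length L" "T \<subseteq> L!k"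
  shows first_facet_le: "first_facet L T \<le> k"
    and first_facet_less_length: "first_facet L T < length L"
    and subset_nth_first_facet: "T \<subseteq> L!(first_facet L T)"
    and not_subset_before_first_facet: "m < first_facet L T \<Longrightarrow> \<not> T \<subseteq> L!m"
proof -
  let ?P = "\<lambda>k. k < length L \<and> T \<subseteq> L!k"
  have "?P k"
    using assms by blast
  then have first: "?P (first_facet L T)"
    unfolding first_facet_def by (rule LeastI)
  then show "T \<subseteq> L!(first_facet L T)" "first_facet L T < length L"
    by blast+
  show "first_facet L T \<le> k"
    unfolding first_facet_def using \<open>?P k\<close> by (rule Least_le)
  show "\<not> T \<subseteq> L!m" if "m < first_facet L T"
  proof -
    have "\<not> ?P m"
      using that unfolding first_facet_def by (rule not_less_Least)
    then show ?thesis
      using that first by simp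
  qed
qed

lemma pinned_imp_broken_line_shelling:
  "pinned_broken_line_shelling Bs L \<Longrightarrow> broken_line_shelling Bs L"
  unfolding pinned_broken_line_shelling_def broken_line_shelling_def by blast

lemma int_lt_iff: "int_lt L a b \<longleftrightarrow> restr L a \<subset> restr L b"
  unfolding int_lt_def int_le_def by blast

lemma int_covers_iff:
  "int_covers L a b \<longleftrightarrow> a < length L \<and> b < length L \<and> restr L a \<subset> restr L b \<and>
     \<not> (\<exists>c<length L. restr L a \<subset> restr L c \<and> restr L c \<subset> restr L b)"
  unfolding int_covers_def int_lt_iff ..

locale broken_line_shelled_matroid = basis_matroid +
  fixes L :: "'a set list"
  assumes shelling: "broken_line_shelling Bs L"
begin

lemma distinct_facets: "distinct L" and set_facets: "set L = Bs"
  using shelling unfolding broken_line_shelling_def by auto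

lemma length_pos: "0 < length L"
  using set_facets bases_nonempty by auto

lemma nth_basis: "k < length L \<Longrightarrow> L!k \<in> Bs"
  using set_facets nth_mem by blast

lemma basis_index:
  assumes "X \<in> Bs"
  shows "\<exists>k<length L. L!k = X"
proof -
  have "X \<in> set L"
    using assms set_facets by simp
  then show ?thesis
    by (simp add: in_set_conv_nth)
qed

lemma nth_facet_inj: "i < length L \<Longrightarrow> j < length L \<Longrightarrow> L!i = L!j \<Longrightarrow> i = j"
  using distinct_facets nth_eq_iff_index_eq by blast

lemma witness_exists: "k < length L \<Longrightarrow> \<exists>l. shelling_witness L k l"
  using shelling unfolding broken_line_shelling_def shelling_witness_def by blast

lemma lighter_exchange_earlier:
  assumes l: "shelling_witness L k l" and k: "k < length L"
    and "a \<in> L!k" "c \<notin> L!k" "insert c (L!k - {a}) \<in> Bs" "l c < l a"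
  shows "\<exists>j<k. L!j = insert c (L!k - {a})"
proof -
  obtain j where j: "j < length L" "L!j = insert c (L!k - {a})"
    using basis_index assms(5) by blast
  have "lweight l (L!j) = lweight l (L!k) - l a + l c"
    unfolding j(2) by (rule lweight_exchange[OF finite_basis[OF nth_basis[OF k]] assms(3,4)])
  then have "lweight l (L!j) < lweight l (L!k)"
    using assms(6) by simp
  then have "j < k"
    using l j(1) unfolding shelling_witness_def by blast
  then show ?thesis
    using j by blast
qed

text \<open>If T lies in an earlier basis, a weight-decreasing exchange from L!k towards it, for a
  witness of k, removes an element b \<notin> T and lands in an earlier basis.\<close>
lemma new_face_iff_explicit:
  assumes k: "k < length L" and T: "T \<subseteq> L!k"
  shows "\<not> (\<exists>m<k. T \<subseteq> L!m) \<longleftrightarrow> {b \<in> L!k. \<exists>m<k. L!k - {b} \<subseteq> L!m} \<subseteq> T"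
proof
  assume "\<not> (\<exists>m<k. T \<subseteq> L!m)"
  then show "{b \<in> L!k. \<exists>m<k. L!k - {b} \<subseteq> L!m} \<subseteq> T"
    using T by blast
next
  assume R: "{b \<in> L!k. \<exists>m<k. L!k - {b} \<subseteq> L!m} \<subseteq> T"
  show "\<not> (\<exists>m<k. T \<subseteq> L!m)"
  proof
    assume "\<exists>m<k. T \<subseteq> L!m"
    then obtain m where m: "m < k" "T \<subseteq> L!m"
      by blast
    obtain l where l: "shelling_witness L k l"
      using witness_exists[OF k] by blast
    then have "lweight l (L!m) < lweight l (L!k)"
      using m(1) k unfolding shelling_witness_def by simp
    moreover have "m < length L"
      using m(1) k by simp
    ultimately obtain a c where a: "a \<in> L!k - L!m" and c: "c \<in> L!m - L!k"
      and ex: "insert c (L!k - {a}) \<in> Bs" "l c < l a"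
      using weight_decreasing_exchange[OF nth_basis[OF k] nth_basis] by blast
    then have "\<exists>j<k. L!j = insert c (L!k - {a})"
      using lighter_exchange_earlier[OF l k] by blast
    then have "a \<in> T"
      using R a by blast
    then show False
      using a m(2) by blast
  qed
qed

lemma restr_eq: "k < length L \<Longrightarrow> restr L k = {b \<in> L!k. \<exists>m<k. L!k - {b} \<subseteq> L!m}"
  by (rule restr_eqI) (blast, rule new_face_iff_explicit)

lemma restr_subset: "k < length L \<Longrightarrow> restr L k \<subseteq> L!k"
  using restr_eq by blast

lemma finite_restr: "k < length L \<Longrightarrow> finite (restr L k)"
  using restr_subset finite_basis[OF nth_basis] finite_subset by blast

lemma new_face_iff:
  "k < length L \<Longrightarrow> T \<subseteq> L!k \<Longrightarrow> \<not> (\<exists>m<k. T \<subseteq> L!m) \<longleftrightarrow> restr L k \<subseteq> T"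
  using new_face_iff_explicit restr_eq by simp

lemma first_facet_eq_iff:
  assumes "k < length L" "T \<subseteq> L!k"
  shows "first_facet L T = k \<longleftrightarrow> restr L k \<subseteq> T"
proof -
  have "first_facet L T = k \<longleftrightarrow> \<not> (\<exists>m<k. T \<subseteq> L!m)"
  proof
    show "\<not> (\<exists>m<k. T \<subseteq> L!m)" if "first_facet L T = k"
      using not_subset_before_first_facet[OF assms] that by blast
    show "first_facet L T = k" if "\<not> (\<exists>m<k. T \<subseteq> L!m)"
      using first_facet_le[OF assms] subset_nth_first_facet[OF assms] that
      by (metis le_neq_implies_less)
  qed
  then show ?thesis
    using new_face_iff[OF assms] by simp
qed

lemma restr_first: "restr L 0 = {}"
  using restr_eq length_pos by simp

lemma restr_nonempty: "0 < k \<Longrightarrow> k < length L \<Longrightarrow> restr L k \<noteq> {}"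
  using new_face_iff[of k "{}"] by blast

lemma int_is_min_iff: "int_is_min L m \<longleftrightarrow> m = 0"
proof
  assume "int_is_min L m"
  then have "m < length L" "restr L m \<subseteq> restr L 0"
    unfolding int_is_min_def int_le_def using length_pos by auto
  then show "m = 0"
    using restr_first restr_nonempty by blast
qed (use length_pos in \<open>simp add: int_is_min_def int_le_def restr_first\<close>)

lemma nth_diff_first_nonempty: "0 < k \<Longrightarrow> k < length L \<Longrightarrow> L!k - L!0 \<noteq> {}"
  using basis_subset_eq[OF nth_basis nth_basis[OF length_pos]] nth_facet_inj[OF _ length_pos]
  by blast

text \<open>If x0 is the element of R = restr L k whose removal first appears latest, at index m, then
  any further element y of R missing from restr L m would force R - y, and hence all of R, into
  L!m with m < k.\<close>
lemma restr_first_facet_remove_latest: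
  assumes k: "k < length L" and x0: "x0 \<in> restr L k"
    and latest: "\<And>y. y \<in> restr L k \<Longrightarrow>
      first_facet L (restr L k - {y}) \<le> first_facet L (restr L k - {x0})"
  shows "restr L (first_facet L (restr L k - {x0})) = restr L k - {x0}"
proof -
  let ?R = "restr L k"
  let ?f = "\<lambda>x. first_facet L (?R - {x})"
  define m where "m = ?f x0"
  have R_sub: "?R - X \<subseteq> L!k" for X
    using restr_subset[OF k] by blast
  have m: "m < length L" "?R - {x0} \<subseteq> L!m"
    unfolding m_def using first_facet_less_length[OF k R_sub] subset_nth_first_facet[OF k R_sub]
    by auto
  have "m \<noteq> k"
    using first_facet_eq_iff[OF k R_sub[of "{x0}"]] x0 unfolding m_def by blast
  then have "m < k"
    using first_facet_le[OF k R_sub[of "{x0}"]] unfolding m_def by simp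
  have "restr L m \<subseteq> ?R - {x0}"
    using first_facet_eq_iff[OF m] unfolding m_def by simp
  moreover have "?R - {x0} \<subseteq> restr L m"
  proof
    fix y assume y: "y \<in> ?R - {x0}"
    show "y \<in> restr L m"
    proof (rule ccontr)
      assume "y \<notin> restr L m"
      then have "restr L m \<subseteq> ?R - {x0} - {y}"
        using \<open>restr L m \<subseteq> ?R - {x0}\<close> by blast
      then have "first_facet L (?R - {x0} - {y}) = m"
        using first_facet_eq_iff[OF m(1)] m(2) by blast
      moreover have "first_facet L (?R - {x0} - {y}) \<le> ?f y"
        by (rule first_facet_le[OF first_facet_less_length[OF k R_sub]])
          (use subset_nth_first_facet[OF k R_sub[of "{y}"]] in blast)
      ultimately have "?f y = m"
        using latest[of y] y unfolding m_def by simp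
      then have "?R \<subseteq> L!m"
        using subset_nth_first_facet[OF k R_sub[of "{y}"]] m(2) y by auto
      then show False
        using new_face_iff[OF k restr_subset[OF k]] \<open>m < k\<close> by blast
    qed
  qed
  ultimately have "restr L m = ?R - {x0}"
    by blast
  then show ?thesis
    unfolding m_def .
qed

lemma restr_lower_neighbour:
  assumes k: "k < length L" and nonempty: "restr L k \<noteq> {}"
  shows "\<exists>m<length L. restr L m \<subseteq> restr L k \<and> card (restr L m) + 1 = card (restr L k)"
proof -
  let ?R = "restr L k"
  let ?f = "\<lambda>x. first_facet L (?R - {x})"
  obtain x0 where x0: "x0 \<in> ?R" and latest: "\<And>y. y \<in> ?R \<Longrightarrow> ?f y \<le> ?f x0"
    using finite_obtain_arg_max[OF finite_restr[OF k] nonempty, of ?f] by blast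
  have "?R - {x0} \<subseteq> L!k"
    using restr_subset[OF k] by blast
  then have "?f x0 < length L"
    by (rule first_facet_less_length[OF k])
  moreover have "restr L (?f x0) = ?R - {x0}"
    by (rule restr_first_facet_remove_latest[OF k x0 latest])
  moreover have "card ?R > 0"
    using x0 finite_restr[OF k] card_gt_0_iff by blast
  ultimately show ?thesis
    using x0 finite_restr[OF k] by (intro exI[of _ "?f x0"]) (simp add: card_Diff_singleton)
qed

lemma int_covers_of_card_restr:
  assumes ab: "a < length L" "b < length L"
    and "restr L a \<subseteq> restr L b" "card (restr L a) + 1 = card (restr L b)"
  shows "int_covers L a b"
proof -
  have "\<not> (\<exists>c<length L. restr L a \<subset> restr L c \<and> restr L c \<subset> restr L b)"
  proof
    assume "\<exists>c<length L. restr L a \<subset> restr L c \<and> restr L c \<subset> restr L b"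
    then obtain c where "c < length L" "restr L a \<subset> restr L c" "restr L c \<subset> restr L b"
      by blast
    then have "card (restr L a) < card (restr L c)" "card (restr L c) < card (restr L b)"
      using psubset_card_mono[OF finite_restr] ab by blast+
    then show False
      using assms(4) by simp
  qed
  moreover have "restr L a \<subset> restr L b"
    using assms(3,4) by auto
  ultimately show ?thesis
    unfolding int_covers_iff using ab by blast
qed

lemma int_rank_fun_eq_card_restr:
  assumes rank_fun: "int_rank_fun L \<rho>" and k: "k < length L"
  shows "\<rho> k = card (restr L k)"
  using k
proof (induction "card (restr L k)" arbitrary: k rule: less_induct)
  case (less k)
  show ?case
  proof (cases "restr L k = {}")
    case True
    then have "int_is_min L k"
      using int_is_min_iff restr_nonempty less.prems by blast
    then show ?thesis
      using rank_fun True unfolding int_rank_fun_def by simp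
  next
    case False
    then obtain a where a: "a < length L" "restr L a \<subseteq> restr L k"
      "card (restr L a) + 1 = card (restr L k)"
      using restr_lower_neighbour[OF less.prems] by blast
    then have "int_covers L a k"
      using int_covers_of_card_restr less.prems by blast
    then have "\<rho> k = \<rho> a + 1"
      using rank_fun unfolding int_rank_fun_def by blast
    then show ?thesis
      using less.hyps[OF _ a(1)] a(3) by simp
  qed
qed

end

section \<open>h-vectors of complexes partitioned into intervals\<close>

lemma sum_Pow_power_card:
  fixes x y :: "'b::comm_semiring_1"
  assumes T: "finite T"
  shows "(\<Sum>U\<in>Pow T. x ^ card U * y ^ (card T - card U)) = (x + y) ^ card T"
proof -
  have "(x + y) ^ card T = (\<Sum>U\<in>Pow T. (\<Prod>t\<in>U. x) * (\<Prod>t\<in>T - U. y))"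
    using prod_add[OF T, of "\<lambda>_. x" "\<lambda>_. y"] by simp
  also have "\<dots> = (\<Sum>U\<in>Pow T. x ^ card U * y ^ (card T - card U))"
    by (rule sum.cong) (auto simp: card_Diff_subset finite_subset[OF _ T])
  finally show ?thesis
    by simp
qed

lemma sum_interval_power_card:
  fixes x :: "'b::comm_ring_1"
  assumes J: "finite J" and RJ: "R \<subseteq> J"
  shows "(\<Sum>G\<in>{G. R \<subseteq> G \<and> G \<subseteq> J}. x ^ card G * (1 - x) ^ (card J - card G)) = x ^ card R"
proof -
  let ?T = "J - R"
  have T: "finite ?T" "finite R"
    using J RJ finite_subset by auto
  have card_J: "card J = card R + card ?T"
    using card_Diff_subset[OF T(2) RJ] card_mono[OF J RJ] by simp
  have card_union: "card (R \<union> U) = card R + card U" if "U \<in> Pow ?T" for U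
    using that T finite_subset[of U ?T] by (subst card_Un_disjoint) auto
  have "{G. R \<subseteq> G \<and> G \<subseteq> J} = (\<lambda>U. R \<union> U) ` Pow ?T"
  proof
    show "{G. R \<subseteq> G \<and> G \<subseteq> J} \<subseteq> (\<lambda>U. R \<union> U) ` Pow ?T"
    proof
      fix G assume "G \<in> {G. R \<subseteq> G \<and> G \<subseteq> J}"
      then have "G = R \<union> (G - R)" "G - R \<in> Pow ?T"
        by auto
      then show "G \<in> (\<lambda>U. R \<union> U) ` Pow ?T"
        by blast
    qed
  qed (use RJ in auto)
  moreover have "inj_on (\<lambda>U. R \<union> U) (Pow ?T)"
    by (rule inj_onI) blast
  ultimately have "(\<Sum>G\<in>{G. R \<subseteq> G \<and> G \<subseteq> J}. x ^ card G * (1 - x) ^ (card J - card G))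
      = (\<Sum>U\<in>Pow ?T. x ^ card (R \<union> U) * (1 - x) ^ (card J - card (R \<union> U)))"
    by (simp add: sum.reindex)
  also have "\<dots> = (\<Sum>U\<in>Pow ?T. x ^ card R * (x ^ card U * (1 - x) ^ (card ?T - card U)))"
    by (rule sum.cong) (simp_all add: card_union card_J power_add)
  also have "\<dots> = x ^ card R"
    by (simp add: sum_distrib_left[symmetric] sum_Pow_power_card[OF T(1)])
  finally show ?thesis .
qed

lemma hvec_sum_faces:
  assumes F: "finite F" and d: "Max (card ` F) = d"
  shows "hvec F j = coeff (\<Sum>G\<in>F. [:0, 1:] ^ card G * (1 - [:0, 1:]) ^ (d - card G)) j"
proof -
  let ?X = "[:0, 1:] :: int poly"
  define h where "h G = ?X ^ card G * (1 - ?X) ^ (d - card G)" for G :: "'a set"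
  have "1 - ?X = [:1, -1:]"
    by (simp add: one_pCons)
  then have "(\<Sum>i\<le>d. of_nat (card {G \<in> F. card G = i}) * monom 1 i * [:1, -1:] ^ (d - i))
      = (\<Sum>i\<le>d. sum h {G \<in> F. card G = i})"
    by (intro sum.cong) (simp_all add: h_def monom_altdef)
  also have "\<dots> = sum h F"
    using F d by (intro sum.group F) auto
  finally show ?thesis
    unfolding hvec_def Let_def d h_def by simp
qed

lemma hvec_interval_partition:
  fixes F :: "'a set set" and f :: "'a set \<Rightarrow> 'b"
  assumes K: "finite K" "K \<noteq> {}" and f: "\<And>G. G \<in> F \<Longrightarrow> f G \<in> K"
    and fiber: "\<And>k. k \<in> K \<Longrightarrow> {G \<in> F. f G = k} = {G. R k \<subseteq> G \<and> G \<subseteq> J k}"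
    and RJ: "\<And>k. k \<in> K \<Longrightarrow> R k \<subseteq> J k"
    and J: "\<And>k. k \<in> K \<Longrightarrow> finite (J k)" "\<And>k. k \<in> K \<Longrightarrow> card (J k) = d"
  shows "hvec F j = int (card {k \<in> K. card (R k) = j})"
proof -
  let ?X = "[:0, 1:] :: int poly"
  have face: "G \<subseteq> J (f G)" if "G \<in> F" for G
    using fiber[OF f[OF that]] that by blast
  have "F \<subseteq> (\<Union>k\<in>K. Pow (J k))"
    using face f by blast
  then have F: "finite F"
    by (rule finite_subset) (use K(1) J(1) in simp)
  have card_le: "card G \<le> d" if "G \<in> F" for G
    using card_mono[OF J(1) face] J(2) f that by metis
  have "J k \<in> F" if "k \<in> K" for k
    using fiber[OF that] RJ[OF that] by blast
  then have "Max (card ` F) = d"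
    using K(2) J(2) card_le F by (intro Max_eqI) auto
  then have "hvec F j = coeff (\<Sum>G\<in>F. ?X ^ card G * (1 - ?X) ^ (d - card G)) j"
    by (rule hvec_sum_faces[OF F])
  also have "(\<Sum>G\<in>F. ?X ^ card G * (1 - ?X) ^ (d - card G))
      = (\<Sum>k\<in>K. \<Sum>G\<in>{G \<in> F. f G = k}. ?X ^ card G * (1 - ?X) ^ (d - card G))"
    using f by (intro sum.group[symmetric] F K(1)) auto
  also have "\<dots> = (\<Sum>k\<in>K. monom 1 (card (R k)))"
    using sum_interval_power_card[OF J(1) RJ] J(2) fiber
    by (intro sum.cong) (simp_all add: monom_altdef)
  also have "coeff \<dots> j = int (card {k \<in> K. card (R k) = j})"
  proof -
    have "K \<inter> {k. card (R k) = j} = {k \<in> K. card (R k) = j}"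
      by blast
    then show ?thesis
      using K(1) by (simp add: coeff_sum coeff_monom sum.If_cases)
  qed
  finally show ?thesis .
qed

section \<open>Pinned shellings\<close>

locale pinned_shelled_matroid = basis_matroid +
  fixes L :: "'a set list"
  assumes pinned: "pinned_broken_line_shelling Bs L"

sublocale pinned_shelled_matroid \<subseteq> broken_line_shelled_matroid
  by unfold_locales (rule pinned_imp_broken_line_shelling[OF pinned])

context pinned_shelled_matroid
begin

lemma pinned_witness:
  assumes k: "k < length L"
  obtains l where "shelling_witness L k l" "unique_min_weight_basis Bs l (L!0)"
proof -
  obtain l where l: "shelling_witness L k l"
    and first_min: "\<forall>j<length L. j \<noteq> 0 \<longrightarrow> lweight l (L!0) < lweight l (L!j)"
    using pinned k unfolding pinned_broken_line_shelling_def shelling_witness_def by blast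
  have "lweight l (L!0) < lweight l B" if B: "B \<in> Bs" "B \<noteq> L!0" for B
  proof -
    obtain j where "j < length L" "L!j = B"
      using basis_index[OF B(1)] by blast
    then show ?thesis
      using first_min B(2) by (cases "j = 0") auto
  qed
  then have "unique_min_weight_basis Bs l (L!0)"
    unfolding unique_min_weight_basis_def using nth_basis[OF length_pos] by blast
  with l show ?thesis
    by (rule that)
qed

text \<open>Exchanging e into the first basis makes it heavier, so exchanging e out of L!k makes it
  lighter, hence earlier.\<close>
lemma nth_diff_first_subset_restr:
  assumes k: "k < length L"
  shows "L!k - L!0 \<subseteq> restr L k"
proof
  fix e assume e: "e \<in> L!k - L!0"
  obtain l where l: "shelling_witness L k l" and B0: "unique_min_weight_basis Bs l (L!0)"
    using pinned_witness[OF k] .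
  obtain c where c: "c \<in> L!0 - L!k" "insert c (L!k - {e}) \<in> Bs" "insert e (L!0 - {c}) \<in> Bs"
    using basis_symmetric_exchange[OF nth_basis[OF k] nth_basis[OF length_pos] e] by blast
  have "l c < l e"
    using unique_min_weight_basis_exchange_heavier[OF B0 _ _ c(3)] c(1) e by blast
  then have "\<exists>j<k. L!j = insert c (L!k - {e})"
    using lighter_exchange_earlier[OF l k] c e by blast
  then show "e \<in> restr L k"
    using restr_eq[OF k] e by blast
qed

lemma restr_inter_first_exchange:
  assumes k: "k < length L" and b: "b \<in> restr L k" "b \<in> L!0"
  shows "\<exists>m<k. \<exists>e\<in>L!0 - L!k. L!m = insert e (L!k - {b})"
proof -
  obtain l where l: "shelling_witness L k l" and B0: "unique_min_weight_basis Bs l (L!0)"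
    using pinned_witness[OF k] .
  have bk: "b \<in> L!k"
    using b(1) restr_subset[OF k] by blast
  obtain m where m: "m < k" "L!k - {b} \<subseteq> L!m"
    using b(1) restr_eq[OF k] by blast
  have "m < length L"
    using m(1) k by simp
  then have "L!m \<noteq> L!k"
    using nth_facet_inj[OF _ k] m(1) by blast
  then obtain e where e: "e \<notin> L!k" "L!m = insert e (L!k - {b})"
    using basis_exchange_of_supset[OF nth_basis[OF \<open>m < length L\<close>] nth_basis[OF k] bk m(2)]
    by blast
  have "lweight l (L!m) < lweight l (L!k)"
    using l m(1) \<open>m < length L\<close> unfolding shelling_witness_def by blast
  moreover have "lweight l (L!m) = lweight l (L!k) - l b + l e"
    unfolding e(2) by (rule lweight_exchange[OF finite_basis[OF nth_basis[OF k]] bk e(1)])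
  ultimately have "l e < l b"
    by simp
  moreover have "insert b (L!k - {b}) = L!k"
    using bk by blast
  moreover have "insert e (L!k - {b}) \<in> Bs"
    using nth_basis[OF \<open>m < length L\<close>] e(2) by simp
  ultimately obtain x where x: "x \<in> L!0" "x \<notin> L!k" "insert x (L!k - {b}) \<in> Bs" "l x < l b"
    using unique_min_weight_basis_lighter_exchange[OF B0, of e "L!k - {b}" b] e(1) by metis
  then show ?thesis
    using lighter_exchange_earlier[OF l k bk] by blast
qed

text \<open>Take the first basis with difference J to L!0: by the previous lemma, an element of its
  restriction set inside L!0 would yield an earlier basis with the same difference.\<close>
lemma exists_restr_eq:
  assumes J: "indep Bs J" "J \<inter> L!0 = {}"
  shows "\<exists>c<length L. L!c - L!0 = J \<and> restr L c = J"
proof -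
  obtain W where W: "W \<subseteq> L!0" "J \<union> W \<in> Bs"
    by (rule indep_extend_basis[OF J(1) nth_basis[OF length_pos]])
  obtain j where j: "j < length L" "L!j = J \<union> W"
    using basis_index[OF W(2)] by blast
  let ?P = "\<lambda>c. c < length L \<and> L!c - L!0 = J"
  have "?P j"
    using j W J(2) by blast
  define c where "c = (LEAST c. ?P c)"
  have c: "?P c"
    unfolding c_def using \<open>?P j\<close> by (rule LeastI)
  have c_least: "\<not> ?P m" if "m < c" for m
    using that unfolding c_def by (rule not_less_Least)
  have "restr L c \<inter> L!0 = {}"
  proof (rule ccontr)
    assume "restr L c \<inter> L!0 \<noteq> {}"
    then obtain b where "b \<in> restr L c" "b \<in> L!0"
      by blast
    then obtain m e where "m < c" "e \<in> L!0 - L!c" "L!m = insert e (L!c - {b})"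
      using restr_inter_first_exchange c by blast
    then have "?P m"
      using c \<open>b \<in> L!0\<close> by auto
    then show False
      using c_least \<open>m < c\<close> by blast
  qed
  moreover have "L!c - L!0 \<subseteq> restr L c" "restr L c \<subseteq> L!c"
    using nth_diff_first_subset_restr restr_subset c by blast+
  ultimately have "restr L c = J"
    using c by blast
  then show ?thesis
    using c by blast
qed

lemma restr_singleton_notin_first:
  assumes a: "a < length L" and "restr L a = {x}"
  shows "x \<notin> L!0"
proof -
  have "a \<noteq> 0"
  proof
    assume "a = 0"
    then show False
      using assms(2) restr_first by simp
  qed
  then obtain y where "y \<in> L!a - L!0"
    using nth_diff_first_nonempty a by blast
  then have "y = x"
    using nth_diff_first_subset_restr[OF a] assms(2) by blast
  with \<open>y \<in> L!a - L!0\<close> show ?thesis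
    by blast
qed

lemma exists_restr_singleton:
  assumes "k < length L" "x \<in> L!k - L!0"
  shows "\<exists>a<length L. restr L a = {x}"
proof -
  have "{x} \<subseteq> L!k"
    using assms(2) by blast
  then have "indep Bs {x}"
    by (rule indep_subset[OF basis_indep[OF nth_basis[OF assms(1)]]])
  moreover have "{x} \<inter> L!0 = {}"
    using assms(2) by blast
  ultimately obtain a where "a < length L" "restr L a = {x}"
    using exists_restr_eq[of "{x}"] by blast
  then show ?thesis
    by blast
qed

lemma int_atom_iff:
  assumes a: "a < length L"
  shows "int_atom L a \<longleftrightarrow> card (restr L a) = 1"
proof
  assume "int_atom L a"
  then have covers: "int_covers L 0 a"
    by (simp add: int_atom_def int_is_min_iff)
  then have "a \<noteq> 0"
    unfolding int_covers_iff by auto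
  then obtain x where x: "x \<in> L!a - L!0"
    using nth_diff_first_nonempty a by blast
  obtain c where c: "c < length L" "restr L c = {x}"
    using exists_restr_singleton[OF a x] by blast
  have "x \<in> restr L a"
    using nth_diff_first_subset_restr[OF a] x by blast
  moreover have "\<not> (restr L 0 \<subset> restr L c \<and> restr L c \<subset> restr L a)"
    using covers c(1) unfolding int_covers_iff by simp
  ultimately have "restr L a = {x}"
    using c(2) restr_first by auto
  then show "card (restr L a) = 1"
    by simp
next
  assume "card (restr L a) = 1"
  then obtain x where x: "restr L a = {x}"
    by (rule card_1_singletonE)
  have "\<not> (restr L 0 \<subset> restr L c \<and> restr L c \<subset> restr L a)" for c
    unfolding x restr_first by blast
  moreover have "restr L 0 \<subset> restr L a"
    unfolding x restr_first by blast
  ultimately have "int_covers L 0 a"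
    unfolding int_covers_iff using a length_pos by blast
  then show "int_atom L a"
    by (auto simp: int_atom_def int_is_min_iff)
qed

lemma atoms_below_eq:
  assumes k: "k < length L"
  shows "atoms_below L k = {a. a < length L \<and> (\<exists>x\<in>L!k - L!0. restr L a = {x})}"
proof -
  have "int_atom L a \<and> restr L a \<subseteq> restr L k \<longleftrightarrow> (\<exists>x\<in>L!k - L!0. restr L a = {x})"
    if a: "a < length L" for a
  proof -
    have "restr L a = {x} \<Longrightarrow> x \<in> restr L k \<longleftrightarrow> x \<in> L!k - L!0" for x
      using restr_singleton_notin_first[OF a] restr_subset[OF k] nth_diff_first_subset_restr[OF k]
      by blast
    then show ?thesis
      unfolding int_atom_iff[OF a] by (auto simp: card_1_singleton_iff)
  qed
  then show ?thesis
    unfolding atoms_below_def int_le_def by blast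
qed

lemma atoms_below_eq_iff:
  assumes k: "k < length L" and I: "indep Bs I" "I \<inter> L!0 = {}"
  shows "atoms_below L k = {a. a < length L \<and> (\<exists>i\<in>I. restr L a = {i})} \<longleftrightarrow> L!k - L!0 = I"
proof -
  have atom: "\<exists>a<length L. restr L a = {x}" if "x \<in> (L!k - L!0) \<union> I" for x
  proof (cases "x \<in> I")
    case True
    then have "indep Bs {x}" "{x} \<inter> L!0 = {}"
      using indep_subset[OF I(1)] I(2) by auto
    then show ?thesis
      using exists_restr_eq by blast
  next
    case False
    then show ?thesis
      using exists_restr_singleton[OF k] that by blast
  qed
  show ?thesis
    unfolding atoms_below_eq[OF k]
  proof
    assume eq: "{a. a < length L \<and> (\<exists>x\<in>L!k - L!0. restr L a = {x})} =
      {a. a < length L \<and> (\<exists>i\<in>I. restr L a = {i})}"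
    show "L!k - L!0 = I"
    proof (rule set_eqI)
      fix x
      show "x \<in> L!k - L!0 \<longleftrightarrow> x \<in> I"
      proof (cases "x \<in> (L!k - L!0) \<union> I")
        case True
        then obtain a where a: "a < length L" "restr L a = {x}"
          using atom by blast
        have "a \<in> {a. a < length L \<and> (\<exists>y\<in>L!k - L!0. restr L a = {y})} \<longleftrightarrow>
          a \<in> {a. a < length L \<and> (\<exists>i\<in>I. restr L a = {i})}"
          by (simp only: eq)
        then show ?thesis
          using a by simp
      qed simp
    qed
  qed simp
qed

lemma card_restr:
  assumes k: "k < length L"
  shows "card (restr L k) = card (L!k - L!0) + card (restr L k \<inter> L!0)"
proof -
  have "restr L k = (L!k - L!0) \<union> (restr L k \<inter> L!0)"
    using nth_diff_first_subset_restr[OF k] restr_subset[OF k] by blast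
  moreover have "finite (L!k - L!0)" "finite (restr L k \<inter> L!0)"
    using finite_basis[OF nth_basis[OF k]] finite_restr[OF k] by auto
  ultimately show ?thesis
    by (subst card_Un_disjoint[symmetric]) auto
qed

lemma contract_face_first_facet:
  assumes I: "I \<inter> L!0 = {}" and G: "G \<subseteq> L!0" "indep Bs (G \<union> I)"
  defines "k \<equiv> first_facet L (G \<union> I)"
  shows "k < length L" "L!k - L!0 = I" "restr L k \<inter> L!0 \<subseteq> G" "G \<subseteq> L!k"
proof -
  obtain B where "B \<in> Bs" "G \<union> I \<subseteq> B"
    using G(2) unfolding indep_def by blast
  then obtain j where j: "j < length L" "G \<union> I \<subseteq> L!j"
    using basis_index by blast
  then show "k < length L"
    unfolding k_def by (rule first_facet_less_length)
  have sub: "G \<union> I \<subseteq> L!k"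
    unfolding k_def by (rule subset_nth_first_facet[OF j])
  then show "G \<subseteq> L!k"
    by blast
  have "restr L k \<subseteq> G \<union> I"
    using first_facet_eq_iff[OF \<open>k < length L\<close> sub] unfolding k_def by simp
  then show "restr L k \<inter> L!0 \<subseteq> G"
    using I by blast
  have "L!k - L!0 \<subseteq> I"
    using nth_diff_first_subset_restr[OF \<open>k < length L\<close>] \<open>restr L k \<subseteq> G \<union> I\<close> G(1) by blast
  moreover have "I \<subseteq> L!k - L!0"
    using sub I by blast
  ultimately show "L!k - L!0 = I"
    by (rule subset_antisym)
qed

lemma mem_contract_restrict_first:
  assumes "I \<inter> L!0 = {}"
  shows "G \<in> contract_restrict_indeps E Bs I (L!0) \<longleftrightarrow> G \<subseteq> L!0 \<and> indep Bs (G \<union> I)"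
  using basis_subset_ground[OF nth_basis[OF length_pos]] assms
  unfolding contract_restrict_indeps_def by auto

lemma contract_face_fiber:
  assumes I: "I \<inter> L!0 = {}" and k: "k < length L" "L!k - L!0 = I"
  shows "{G \<in> contract_restrict_indeps E Bs I (L!0). first_facet L (G \<union> I) = k} =
    {G. restr L k \<inter> L!0 \<subseteq> G \<and> G \<subseteq> L!k \<inter> L!0}"
proof (intro set_eqI iffI)
  fix G assume "G \<in> {G \<in> contract_restrict_indeps E Bs I (L!0). first_facet L (G \<union> I) = k}"
  then have G: "G \<subseteq> L!0" "indep Bs (G \<union> I)" "first_facet L (G \<union> I) = k"
    using mem_contract_restrict_first[OF I] by auto
  then show "G \<in> {G. restr L k \<inter> L!0 \<subseteq> G \<and> G \<subseteq> L!k \<inter> L!0}"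
    using contract_face_first_facet(3,4)[OF I G(1,2)] by simp
next
  fix G assume "G \<in> {G. restr L k \<inter> L!0 \<subseteq> G \<and> G \<subseteq> L!k \<inter> L!0}"
  then have G: "restr L k \<inter> L!0 \<subseteq> G" "G \<subseteq> L!k" "G \<subseteq> L!0"
    by auto
  have sub: "G \<union> I \<subseteq> L!k"
    using G(2) k(2) by blast
  then have "indep Bs (G \<union> I)"
    by (rule indep_subset[OF basis_indep[OF nth_basis[OF k(1)]]])
  moreover have "restr L k \<subseteq> G \<union> I"
    using G(1) restr_subset[OF k(1)] k(2) by blast
  then have "first_facet L (G \<union> I) = k"
    using first_facet_eq_iff[OF k(1) sub] by simp
  ultimately show "G \<in> {G \<in> contract_restrict_indeps E Bs I (L!0). first_facet L (G \<union> I) = k}"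
    using mem_contract_restrict_first[OF I] G(3) by simp
qed

lemma hvec_contract_restrict_first:
  assumes I: "indep Bs I" "I \<inter> L!0 = {}"
  shows "hvec (contract_restrict_indeps E Bs I (L!0)) j =
    int (card {k. k < length L \<and> L!k - L!0 = I \<and> card (restr L k \<inter> L!0) = j})"
proof -
  let ?K = "{k. k < length L \<and> L!k - L!0 = I}"
  have "hvec (contract_restrict_indeps E Bs I (L!0)) j =
      int (card {k \<in> ?K. card (restr L k \<inter> L!0) = j})"
  proof (rule hvec_interval_partition[where f = "\<lambda>G. first_facet L (G \<union> I)"
        and J = "\<lambda>k. L!k \<inter> L!0" and d = "rank - card I"])
    show "finite ?K" "?K \<noteq> {}"
      using exists_restr_eq[OF I] by auto
    show "first_facet L (G \<union> I) \<in> ?K" if "G \<in> contract_restrict_indeps E Bs I (L!0)" for G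
      using that contract_face_first_facet(1,2)[OF I(2)] mem_contract_restrict_first[OF I(2)] by simp
    show "{G \<in> contract_restrict_indeps E Bs I (L!0). first_facet L (G \<union> I) = k} =
        {G. restr L k \<inter> L!0 \<subseteq> G \<and> G \<subseteq> L!k \<inter> L!0}" if "k \<in> ?K" for k
      using contract_face_fiber[OF I(2)] that by simp
    show "restr L k \<inter> L!0 \<subseteq> L!k \<inter> L!0" "finite (L!k \<inter> L!0)" if "k \<in> ?K" for k
      using restr_subset finite_basis[OF nth_basis] that by auto
    show "card (L!k \<inter> L!0) = rank - card I" if k: "k \<in> ?K" for k
    proof -
      have "L!k = I \<union> (L!k \<inter> L!0)" "I \<inter> (L!k \<inter> L!0) = {}"
        using k I(2) by auto
      moreover have "finite (L!k)"
        using finite_basis[OF nth_basis] k by simp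
      ultimately have "card (L!k) = card I + card (L!k \<inter> L!0)"
        by (metis card_Un_disjoint finite_Un)
      then show ?thesis
        using card_basis[OF nth_basis] k by simp
    qed
  qed
  then show ?thesis
    by (simp add: conj_assoc)
qed

end

theorem lemma7p2:
  fixes E :: "'a set" and Bs :: "'a set set" and L :: "'a set list" and I :: "'a set"
  assumes "matroid E Bs"
    and "pinned_broken_line_shelling Bs L"
    and "indep Bs I"
    and "I \<inter> hd L = {}"
  shows "(\<forall>j. int (card {k. k < length L \<and> card (restr L k) = card I + j \<and>
              atoms_below L k = {a. a < length L \<and> (\<exists>i\<in>I. restr L a = {i})}})
           = hvec (contract_restrict_indeps E Bs I (hd L)) j)
       \<and> (int_ranked L \<longrightarrow> (\<forall>\<rho>. int_rank_fun L \<rho> \<longrightarrow> (\<forall>j.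
            int (card {k. k < length L \<and> \<rho> k = card I + j \<and>
              atoms_below L k = {a. a < length L \<and> (\<exists>i\<in>I. restr L a = {i})}})
           = hvec (contract_restrict_indeps E Bs I (hd L)) j)))"
proof -
  interpret pinned_shelled_matroid E Bs L
    using assms(1,2) by unfold_locales
  have hd: "hd L = L!0"
    using length_pos by (simp add: hd_conv_nth)
  have I: "indep Bs I" "I \<inter> L!0 = {}"
    using assms(3,4) hd by simp_all
  let ?atoms = "{a. a < length L \<and> (\<exists>i\<in>I. restr L a = {i})}"
  have count: "{k. k < length L \<and> card (restr L k) = card I + j \<and> atoms_below L k = ?atoms} =
      {k. k < length L \<and> L!k - L!0 = I \<and> card (restr L k \<inter> L!0) = j}" for j
    using atoms_below_eq_iff[OF _ I] card_restr by auto
  have card_restr_case: "int (card {k. k < length L \<and> card (restr L k) = card I + j \<and>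
      atoms_below L k = ?atoms}) = hvec (contract_restrict_indeps E Bs I (hd L)) j" for j
    unfolding hd count hvec_contract_restrict_first[OF I] ..
  have rank_case: "int (card {k. k < length L \<and> \<rho> k = card I + j \<and> atoms_below L k = ?atoms}) =
      hvec (contract_restrict_indeps E Bs I (hd L)) j" if "int_rank_fun L \<rho>" for \<rho> j
  proof -
    have "{k. k < length L \<and> \<rho> k = card I + j \<and> atoms_below L k = ?atoms} =
        {k. k < length L \<and> card (restr L k) = card I + j \<and> atoms_below L k = ?atoms}"
      using int_rank_fun_eq_card_restr[OF that] by auto
    then show ?thesis
      using card_restr_case by simp
  qed
  show ?thesis
    using card_restr_case rank_case by blast
qed

end
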